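(* Let $f:(\mathbb R^2,q)\to(\mathbb R^3,p)$ be a smooth germ with a corank 1 singularity at $q$ whose curvature parabola $\Delta_p$ is a non-degenerate parabola or a half-line, let $(u,v)$ be a coordinate system with $f_u(q)\ne0$ and $f_v(q)=0$, and let $E=\langle f_u,f_u\rangle$, $F=\langle f_u,f_v\rangle$, $G=\langle f_v,f_v\rangle$ be the coefficients of the first fundamental form. Then, evaluating at $q$, $$\kappa_a(p)=\frac{\big(\frac{E_u}{2}F_v-E(F_{uv}-\frac{E_{vv}}{2})\big)\big(F_v^2-E\frac{G_{vv}}{2}\big)-\big(\frac{E_v}{2}F_v-E\frac{G_{uv}}{2}\big)^2}{\Big(E\big(E\frac{G_{vv}}{2}-F_v^2\big)\Big)^{3/2}},$$ where subscripts denote partial derivatives.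
   Context: $T_pM=\operatorname{im}df_q$, $N_pM$ its orthogonal complement with a fixed orientation. First fundamental form $I(X,Y)=\langle df_qX,df_qY\rangle$; second fundamental form $II$: the symmetric bilinear map $T_q\mathbb R^2\times T_q\mathbb R^2\to N_pM$ with $II(\partial_u,\partial_u)=f_{uu}(q)^\perp$, $II(\partial_u,\partial_v)=f_{uv}(q)^\perp$, $II(\partial_v,\partial_v)=f_{vv}(q)^\perp$ ($\perp$ = orthogonal projection to $N_pM$). Curvature parabola $\Delta_p=\{II(X,X): I(X,X)=1\}\subset N_pM$. Axial vector $v_a$: if $\Delta_p$ is a non-degenerate parabola, the unit vector along its axis of symmetry pointing to its interior; if $\Delta_p$ is a half-line, the unit vector in the direction in which the half-line extends. Axial curvature $\kappa_a(p)=\min\{\langle II(X,X),v_a\rangle: I(X,X)=1\}$. *)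

theory Defs
  imports "HOL-Analysis.Analysis"
begin

definition pd_u :: "(real \<times> real \<Rightarrow> 'a::real_normed_vector) \<Rightarrow> real \<times> real \<Rightarrow> 'a" where
  "pd_u g = (\<lambda>(u,v). vector_derivative (\<lambda>t. g (t, v)) (at u))"

definition pd_v :: "(real \<times> real \<Rightarrow> 'a::real_normed_vector) \<Rightarrow> real \<times> real \<Rightarrow> 'a" where
  "pd_v g = (\<lambda>(u,v). vector_derivative (\<lambda>t. g (u, t)) (at v))"

fun iter_pd :: "bool list \<Rightarrow> (real \<times> real \<Rightarrow> 'a::real_normed_vector) \<Rightarrow> real \<times> real \<Rightarrow> 'a" where
  "iter_pd [] g = g"
| "iter_pd (True # ds) g = pd_u (iter_pd ds g)"
| "iter_pd (False # ds) g = pd_v (iter_pd ds g)"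

text \<open>C-infinity on an open set: all iterated partial derivatives exist and are
  (Frechet) differentiable, hence continuous.\<close>
definition smooth_on :: "(real \<times> real) set \<Rightarrow> (real \<times> real \<Rightarrow> 'a::real_normed_vector) \<Rightarrow> bool" where
  "smooth_on S g \<longleftrightarrow> (\<forall>ds. iter_pd ds g differentiable_on S)"

definition tangent_space :: "(real \<times> real \<Rightarrow> real^3) \<Rightarrow> real \<times> real \<Rightarrow> (real^3) set" where
  "tangent_space f q = range (frechet_derivative f (at q))"

definition normal_space :: "(real \<times> real \<Rightarrow> real^3) \<Rightarrow> real \<times> real \<Rightarrow> (real^3) set" where
  "normal_space f q = {n. \<forall>t\<in>tangent_space f q. n \<bullet> t = 0}"

definition normal_proj :: "(real \<times> real \<Rightarrow> real^3) \<Rightarrow> real \<times> real \<Rightarrow> real^3 \<Rightarrow> real^3" where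
  "normal_proj f q x = (THE y. y \<in> normal_space f q \<and> x - y \<in> tangent_space f q)"

definition first_ff :: "(real \<times> real \<Rightarrow> real^3) \<Rightarrow> real \<times> real \<Rightarrow> real \<times> real \<Rightarrow> real \<times> real \<Rightarrow> real" where
  "first_ff f q X Y = frechet_derivative f (at q) X \<bullet> frechet_derivative f (at q) Y"

definition second_ff :: "(real \<times> real \<Rightarrow> real^3) \<Rightarrow> real \<times> real \<Rightarrow> real \<times> real \<Rightarrow> real \<times> real \<Rightarrow> real^3" where
  "second_ff f q X Y =
     (fst X * fst Y) *\<^sub>R normal_proj f q (pd_u (pd_u f) q)
   + (fst X * snd Y + snd X * fst Y) *\<^sub>R normal_proj f q (pd_v (pd_u f) q)
   + (snd X * snd Y) *\<^sub>R normal_proj f q (pd_v (pd_v f) q)"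

definition curvature_parabola :: "(real \<times> real \<Rightarrow> real^3) \<Rightarrow> real \<times> real \<Rightarrow> (real^3) set" where
  "curvature_parabola f q = {second_ff f q X X | X. first_ff f q X X = 1}"

text \<open>A non-degenerate parabola with unit axis vector v pointing to its interior:
  the set c + t e1 + a t^2 v with a > 0, e1, v orthonormal.\<close>
definition parabola_axis :: "(real^3) set \<Rightarrow> real^3 \<Rightarrow> bool" where
  "parabola_axis S v \<longleftrightarrow> norm v = 1 \<and>
     (\<exists>c e1 a. norm e1 = 1 \<and> e1 \<bullet> v = 0 \<and> a > 0 \<and>
        S = {c + t *\<^sub>R e1 + (a * t\<^sup>2) *\<^sub>R v | t. True})"

definition nondeg_parabola :: "(real^3) set \<Rightarrow> bool" where
  "nondeg_parabola S \<longleftrightarrow> (\<exists>v. parabola_axis S v)"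

definition half_line_dir :: "(real^3) set \<Rightarrow> real^3 \<Rightarrow> bool" where
  "half_line_dir S v \<longleftrightarrow> norm v = 1 \<and> (\<exists>c. S = {c + t *\<^sub>R v | t. t \<ge> 0})"

definition half_line :: "(real^3) set \<Rightarrow> bool" where
  "half_line S \<longleftrightarrow> (\<exists>v. half_line_dir S v)"

definition axial_vector :: "(real \<times> real \<Rightarrow> real^3) \<Rightarrow> real \<times> real \<Rightarrow> real^3" where
  "axial_vector f q = (THE v. parabola_axis (curvature_parabola f q) v
                            \<or> half_line_dir (curvature_parabola f q) v)"

definition axial_curvature :: "(real \<times> real \<Rightarrow> real^3) \<Rightarrow> real \<times> real \<Rightarrow> real" where
  "axial_curvature f q =
     (let K = {second_ff f q X X \<bullet> axial_vector f q | X. first_ff f q X X = 1}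
      in THE m. m \<in> K \<and> (\<forall>k\<in>K. m \<le> k))"

end

(* Since f_v(q) = 0, the tangent line at p is spanned by U = f_u(q), the unit vectors of the
   first fundamental form are X = (+-1/|U|, t), and the curvature parabola is the quadratic curve
   t |-> A'/|U|^2 + t (2/|U|) B' + t^2 C', where A', B', C' are the components of f_uu, f_uv, f_vv
   orthogonal to U.  A quadratic curve that is a non-degenerate parabola or a half-line has
   C'/|C'| as its axial vector, so kappa_a is the minimum of a real quadratic polynomial in t,
   a rational expression in the inner products of U, f_uu, f_uv, f_vv.  These are read off from
   E, F, G: at q one has E_u = 2 U.f_uu, E_v = 2 U.f_uv, F_v = U.f_vv, G_uv = 2 f_uv.f_vv,
   G_vv = 2 f_vv.f_vv and F_uv - E_vv/2 = f_uu.f_vv, where the third-order terms cancel because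
   the mixed partials of f commute near q. *)

theory Submission
  imports Defs
begin

section \<open>Partial derivatives\<close>

lemma has_vector_derivative_slice_u:
  assumes "(g has_derivative D) (at (a, b))"
  shows "((\<lambda>t. g (t, b)) has_vector_derivative D (1, 0)) (at a)"
proof -
  have "((\<lambda>t. (t, b)) has_derivative (\<lambda>t. (t, 0))) (at a)"
    by (auto intro!: derivative_eq_intros)
  from diff_chain_at[OF this assms]
  have "(g \<circ> (\<lambda>t. (t, b)) has_derivative D \<circ> (\<lambda>t. (t, 0))) (at a)" .
  moreover have "D \<circ> (\<lambda>t. (t, 0)) = (\<lambda>t. t *\<^sub>R D (1, 0))"
  proof
    fix t :: real
    have "(t, 0::real) = t *\<^sub>R (1, 0)" by simp
    then show "(D \<circ> (\<lambda>t. (t, 0))) t = t *\<^sub>R D (1, 0)"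
      using linear_cmul[OF has_derivative_linear[OF assms], of t "(1, 0)"] by simp
  qed
  ultimately show ?thesis
    unfolding has_vector_derivative_def by (simp add: o_def)
qed

lemma has_vector_derivative_slice_v:
  assumes "(g has_derivative D) (at (a, b))"
  shows "((\<lambda>t. g (a, t)) has_vector_derivative D (0, 1)) (at b)"
proof -
  have "((\<lambda>t. (a, t)) has_derivative (\<lambda>t. (0, t))) (at b)"
    by (auto intro!: derivative_eq_intros)
  from diff_chain_at[OF this assms]
  have "(g \<circ> (\<lambda>t. (a, t)) has_derivative D \<circ> (\<lambda>t. (0, t))) (at b)" .
  moreover have "D \<circ> (\<lambda>t. (0, t)) = (\<lambda>t. t *\<^sub>R D (0, 1))"
  proof
    fix t :: real
    have "(0::real, t) = t *\<^sub>R (0, 1)" by simp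
    then show "(D \<circ> (\<lambda>t. (0, t))) t = t *\<^sub>R D (0, 1)"
      using linear_cmul[OF has_derivative_linear[OF assms], of t "(0, 1)"] by simp
  qed
  ultimately show ?thesis
    unfolding has_vector_derivative_def by (simp add: o_def)
qed

lemma pd_u_eq:
  assumes "(g has_derivative D) (at p)"
  shows "pd_u g p = D (1, 0)"
proof (cases p)
  case (Pair a b)
  with assms have "((\<lambda>t. g (t, b)) has_vector_derivative D (1, 0)) (at a)"
    by (simp add: has_vector_derivative_slice_u)
  with Pair show ?thesis
    by (simp add: pd_u_def vector_derivative_at)
qed

lemma pd_v_eq:
  assumes "(g has_derivative D) (at p)"
  shows "pd_v g p = D (0, 1)"
proof (cases p)
  case (Pair a b)
  with assms have "((\<lambda>t. g (a, t)) has_vector_derivative D (0, 1)) (at b)"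
    by (simp add: has_vector_derivative_slice_v)
  with Pair show ?thesis
    by (simp add: pd_v_def vector_derivative_at)
qed

lemma has_vector_derivative_pd_u:
  "g differentiable (at (a, b)) \<Longrightarrow> ((\<lambda>t. g (t, b)) has_vector_derivative pd_u g (a, b)) (at a)"
  by (metis differentiable_def has_vector_derivative_slice_u pd_u_eq)

lemma has_vector_derivative_pd_v:
  "g differentiable (at (a, b)) \<Longrightarrow> ((\<lambda>t. g (a, t)) has_vector_derivative pd_v g (a, b)) (at b)"
  by (metis differentiable_def has_vector_derivative_slice_v pd_v_eq)

lemma frechet_derivative_eq_pd:
  assumes "f differentiable (at q)"
  shows "frechet_derivative f (at q) X = fst X *\<^sub>R pd_u f q + snd X *\<^sub>R pd_v f q"
proof -
  let ?D = "frechet_derivative f (at q)"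
  have D: "(f has_derivative ?D) (at q)"
    using assms frechet_derivative_works by blast
  have lin: "linear ?D"
    using D has_derivative_linear by blast
  have "X = fst X *\<^sub>R (1, 0) + snd X *\<^sub>R (0, 1)"
    by (cases X) simp
  then have "?D X = fst X *\<^sub>R ?D (1, 0) + snd X *\<^sub>R ?D (0, 1)"
    using linear_add[OF lin] linear_cmul[OF lin] by metis
  moreover have "pd_u f q = ?D (1, 0)" "pd_v f q = ?D (0, 1)"
    using pd_u_eq[OF D] pd_v_eq[OF D] by simp_all
  ultimately show ?thesis
    by simp
qed

lemma pd_u_inner:
  assumes "g differentiable (at p)" "h differentiable (at p)"
  shows "pd_u (\<lambda>x. g x \<bullet> h x) p = pd_u g p \<bullet> h p + g p \<bullet> pd_u h p"
proof -
  obtain Dg Dh where Dg: "(g has_derivative Dg) (at p)" and Dh: "(h has_derivative Dh) (at p)"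
    using assms unfolding differentiable_def by blast
  from pd_u_eq[OF has_derivative_inner[OF Dg Dh]] show ?thesis
    using pd_u_eq[OF Dg] pd_u_eq[OF Dh] by (simp add: add.commute)
qed

lemma pd_v_inner:
  assumes "g differentiable (at p)" "h differentiable (at p)"
  shows "pd_v (\<lambda>x. g x \<bullet> h x) p = pd_v g p \<bullet> h p + g p \<bullet> pd_v h p"
proof -
  obtain Dg Dh where Dg: "(g has_derivative Dg) (at p)" and Dh: "(h has_derivative Dh) (at p)"
    using assms unfolding differentiable_def by blast
  from pd_v_eq[OF has_derivative_inner[OF Dg Dh]] show ?thesis
    using pd_v_eq[OF Dg] pd_v_eq[OF Dh] by (simp add: add.commute)
qed

lemma pd_v_add:
  assumes "g differentiable (at p)" "h differentiable (at p)"
  shows "pd_v (\<lambda>x. g x + h x) p = pd_v g p + pd_v h p"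
proof -
  obtain Dg Dh where Dg: "(g has_derivative Dg) (at p)" and Dh: "(h has_derivative Dh) (at p)"
    using assms unfolding differentiable_def by blast
  from pd_v_eq[OF has_derivative_add[OF Dg Dh]] show ?thesis
    using pd_v_eq[OF Dg] pd_v_eq[OF Dh] by (simp add: add.commute)
qed

lemma pd_v_cong_open:
  assumes "open S" "p \<in> S" "\<And>x. x \<in> S \<Longrightarrow> k x = h x" "h differentiable (at p)"
  shows "pd_v k p = pd_v h p"
proof -
  obtain D where D: "(h has_derivative D) (at p)"
    using assms(4) unfolding differentiable_def by blast
  moreover have "(k has_derivative D) (at p)"
    by (rule has_derivative_transform_within_open[OF D assms(1,2)]) (simp add: assms(3))
  ultimately show ?thesis
    by (simp add: pd_v_eq)
qed

lemma has_real_derivative_inner_slice_u: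
  "g differentiable (at (a, b)) \<Longrightarrow> ((\<lambda>s. w \<bullet> g (s, b)) has_real_derivative w \<bullet> pd_u g (a, b)) (at a)"
  using bounded_linear.has_vector_derivative[OF bounded_linear_inner_right has_vector_derivative_pd_u]
  by (simp add: has_real_derivative_iff_has_vector_derivative)

lemma has_real_derivative_inner_slice_v:
  "g differentiable (at (a, b)) \<Longrightarrow> ((\<lambda>t. w \<bullet> g (a, t)) has_real_derivative w \<bullet> pd_v g (a, b)) (at b)"
  using bounded_linear.has_vector_derivative[OF bounded_linear_inner_right has_vector_derivative_pd_v]
  by (simp add: has_real_derivative_iff_has_vector_derivative)

section \<open>Symmetry of the mixed partial derivatives\<close>

definition rect_diff :: "(real \<times> real \<Rightarrow> 'a::real_vector) \<Rightarrow> real \<Rightarrow> real \<Rightarrow> real \<Rightarrow> 'a" where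
  "rect_diff g x0 y0 h = g (x0 + h, y0 + h) - g (x0 + h, y0) - g (x0, y0 + h) + g (x0, y0)"

lemma rect_diff_eq_pd_v_pd_u:
  fixes g :: "real \<times> real \<Rightarrow> 'a::real_inner"
  assumes "h > 0"
    and diff: "\<And>s t. x0 \<le> s \<Longrightarrow> s \<le> x0 + h \<Longrightarrow> y0 \<le> t \<Longrightarrow> t \<le> y0 + h \<Longrightarrow>
      g differentiable (at (s, t)) \<and> pd_u g differentiable (at (s, t))"
  obtains \<xi> \<eta> where "x0 < \<xi>" "\<xi> < x0 + h" "y0 < \<eta>" "\<eta> < y0 + h"
    "w \<bullet> rect_diff g x0 y0 h = h\<^sup>2 * (w \<bullet> pd_v (pd_u g) (\<xi>, \<eta>))"
proof -
  have "\<exists>\<xi>. x0 < \<xi> \<and> \<xi> < x0 + h \<and>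
      (w \<bullet> g (x0 + h, y0 + h) - w \<bullet> g (x0 + h, y0)) - (w \<bullet> g (x0, y0 + h) - w \<bullet> g (x0, y0))
      = (x0 + h - x0) * (w \<bullet> pd_u g (\<xi>, y0 + h) - w \<bullet> pd_u g (\<xi>, y0))"
    using \<open>h > 0\<close> diff
    by (intro MVT2) (auto intro!: DERIV_diff has_real_derivative_inner_slice_u)
  then obtain \<xi> where \<xi>: "x0 < \<xi>" "\<xi> < x0 + h"
    and rect: "w \<bullet> rect_diff g x0 y0 h = h * (w \<bullet> pd_u g (\<xi>, y0 + h) - w \<bullet> pd_u g (\<xi>, y0))"
    by (auto simp: rect_diff_def inner_add_right inner_diff_right)
  have "\<exists>\<eta>. y0 < \<eta> \<and> \<eta> < y0 + h \<and>
      w \<bullet> pd_u g (\<xi>, y0 + h) - w \<bullet> pd_u g (\<xi>, y0) = (y0 + h - y0) * (w \<bullet> pd_v (pd_u g) (\<xi>, \<eta>))"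
    using \<open>h > 0\<close> diff \<xi> by (intro MVT2) (auto intro!: has_real_derivative_inner_slice_v)
  then obtain \<eta> where "y0 < \<eta>" "\<eta> < y0 + h"
    and "w \<bullet> pd_u g (\<xi>, y0 + h) - w \<bullet> pd_u g (\<xi>, y0) = h * (w \<bullet> pd_v (pd_u g) (\<xi>, \<eta>))"
    by auto
  with \<xi> rect show thesis
    by (intro that[of \<xi> \<eta>]) (simp_all add: power2_eq_square)
qed

lemma rect_diff_eq_pd_u_pd_v:
  fixes g :: "real \<times> real \<Rightarrow> 'a::real_inner"
  assumes "h > 0"
    and diff: "\<And>s t. x0 \<le> s \<Longrightarrow> s \<le> x0 + h \<Longrightarrow> y0 \<le> t \<Longrightarrow> t \<le> y0 + h \<Longrightarrow>
      g differentiable (at (s, t)) \<and> pd_v g differentiable (at (s, t))"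
  obtains \<xi> \<eta> where "x0 < \<xi>" "\<xi> < x0 + h" "y0 < \<eta>" "\<eta> < y0 + h"
    "w \<bullet> rect_diff g x0 y0 h = h\<^sup>2 * (w \<bullet> pd_u (pd_v g) (\<xi>, \<eta>))"
proof -
  have "\<exists>\<eta>. y0 < \<eta> \<and> \<eta> < y0 + h \<and>
      (w \<bullet> g (x0 + h, y0 + h) - w \<bullet> g (x0, y0 + h)) - (w \<bullet> g (x0 + h, y0) - w \<bullet> g (x0, y0))
      = (y0 + h - y0) * (w \<bullet> pd_v g (x0 + h, \<eta>) - w \<bullet> pd_v g (x0, \<eta>))"
    using \<open>h > 0\<close> diff
    by (intro MVT2) (auto intro!: DERIV_diff has_real_derivative_inner_slice_v)
  then obtain \<eta> where \<eta>: "y0 < \<eta>" "\<eta> < y0 + h"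
    and rect: "w \<bullet> rect_diff g x0 y0 h = h * (w \<bullet> pd_v g (x0 + h, \<eta>) - w \<bullet> pd_v g (x0, \<eta>))"
    by (auto simp: rect_diff_def inner_add_right inner_diff_right algebra_simps)
  have "\<exists>\<xi>. x0 < \<xi> \<and> \<xi> < x0 + h \<and>
      w \<bullet> pd_v g (x0 + h, \<eta>) - w \<bullet> pd_v g (x0, \<eta>) = (x0 + h - x0) * (w \<bullet> pd_u (pd_v g) (\<xi>, \<eta>))"
    using \<open>h > 0\<close> diff \<eta> by (intro MVT2) (auto intro!: has_real_derivative_inner_slice_u)
  then obtain \<xi> where "x0 < \<xi>" "\<xi> < x0 + h"
    and "w \<bullet> pd_v g (x0 + h, \<eta>) - w \<bullet> pd_v g (x0, \<eta>) = h * (w \<bullet> pd_u (pd_v g) (\<xi>, \<eta>))"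
    by auto
  with \<eta> rect show thesis
    by (intro that[of \<xi> \<eta>]) (simp_all add: power2_eq_square)
qed

lemma mixed_pd_agree_near:
  fixes g :: "real \<times> real \<Rightarrow> 'a::real_inner"
  assumes "d > 0" "cball (x0, y0) d \<subseteq> S"
    and "\<And>x. x \<in> S \<Longrightarrow> g differentiable (at x)"
      "\<And>x. x \<in> S \<Longrightarrow> pd_u g differentiable (at x)" "\<And>x. x \<in> S \<Longrightarrow> pd_v g differentiable (at x)"
  obtains x x' where "dist x (x0, y0) < d" "dist x' (x0, y0) < d"
    "w \<bullet> pd_v (pd_u g) x = w \<bullet> pd_u (pd_v g) x'"
proof -
  define h where "h = d / 3"
  have "h > 0"
    using \<open>d > 0\<close> by (simp add: h_def)
  have near: "dist (s, t) (x0, y0) < d" if "x0 \<le> s" "s \<le> x0 + h" "y0 \<le> t" "t \<le> y0 + h" for s t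
  proof -
    have "dist (s, t) (x0, y0) \<le> \<bar>s - x0\<bar> + \<bar>t - y0\<bar>"
      by (simp add: dist_Pair_Pair dist_real_def sqrt_sum_squares_le_sum_abs)
    also have "\<dots> < d"
      using that \<open>d > 0\<close> by (simp add: h_def)
    finally show ?thesis .
  qed
  then have box: "(s, t) \<in> S" if "x0 \<le> s" "s \<le> x0 + h" "y0 \<le> t" "t \<le> y0 + h" for s t
    using that assms(2) by (force simp: dist_commute)
  obtain \<xi> \<eta> where \<xi>\<eta>: "x0 < \<xi>" "\<xi> < x0 + h" "y0 < \<eta>" "\<eta> < y0 + h"
    and uv: "w \<bullet> rect_diff g x0 y0 h = h\<^sup>2 * (w \<bullet> pd_v (pd_u g) (\<xi>, \<eta>))"
    using rect_diff_eq_pd_v_pd_u[OF \<open>h > 0\<close>] box assms(3,4) by metis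
  obtain \<xi>' \<eta>' where \<xi>\<eta>': "x0 < \<xi>'" "\<xi>' < x0 + h" "y0 < \<eta>'" "\<eta>' < y0 + h"
    and vu: "w \<bullet> rect_diff g x0 y0 h = h\<^sup>2 * (w \<bullet> pd_u (pd_v g) (\<xi>', \<eta>'))"
    using rect_diff_eq_pd_u_pd_v[OF \<open>h > 0\<close>] box assms(3,5) by metis
  show thesis
  proof (rule that)
    show "dist (\<xi>, \<eta>) (x0, y0) < d" "dist (\<xi>', \<eta>') (x0, y0) < d"
      using near \<xi>\<eta> \<xi>\<eta>' by simp_all
    show "w \<bullet> pd_v (pd_u g) (\<xi>, \<eta>) = w \<bullet> pd_u (pd_v g) (\<xi>', \<eta>')"
      using uv vu \<open>h > 0\<close> by simp
  qed
qed

lemma pd_u_pd_v_commute: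
  fixes g :: "real \<times> real \<Rightarrow> 'a::real_inner"
  assumes "open S" "p \<in> S"
    and diff: "\<And>x. x \<in> S \<Longrightarrow> g differentiable (at x)"
      "\<And>x. x \<in> S \<Longrightarrow> pd_u g differentiable (at x)" "\<And>x. x \<in> S \<Longrightarrow> pd_v g differentiable (at x)"
    and "continuous_on S (pd_v (pd_u g))" "continuous_on S (pd_u (pd_v g))"
  shows "pd_u (pd_v g) p = pd_v (pd_u g) p"
proof -
  let ?M = "pd_v (pd_u g)" and ?N = "pd_u (pd_v g)"
  obtain x0 y0 where p: "p = (x0, y0)"
    by (cases p)
  \<comment> \<open>The mean value theorem is only available for the scalar functions \<open>w \<bullet> g\<close>.\<close>
  have "w \<bullet> ?M p = w \<bullet> ?N p" for w
  proof (rule ccontr)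
    assume "w \<bullet> ?M p \<noteq> w \<bullet> ?N p"
    then have e: "\<bar>w \<bullet> ?M p - w \<bullet> ?N p\<bar> / 2 > 0"
      by simp
    have "isCont ?M p" "isCont ?N p"
      using assms(1,2,6,7) continuous_on_eq_continuous_at by blast+
    then have "isCont (\<lambda>x. w \<bullet> ?M x) p" "isCont (\<lambda>x. w \<bullet> ?N x) p"
      by simp_all
    with e obtain d1 d2 where "d1 > 0" "d2 > 0"
      and d1: "\<And>x. dist x p < d1 \<Longrightarrow> dist (w \<bullet> ?M x) (w \<bullet> ?M p) < \<bar>w \<bullet> ?M p - w \<bullet> ?N p\<bar> / 2"
      and d2: "\<And>x. dist x p < d2 \<Longrightarrow> dist (w \<bullet> ?N x) (w \<bullet> ?N p) < \<bar>w \<bullet> ?M p - w \<bullet> ?N p\<bar> / 2"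
      unfolding continuous_at_eps_delta by metis
    obtain d0 where "d0 > 0" "cball p d0 \<subseteq> S"
      using assms(1,2) open_contains_cball by blast
    define d where "d = min d0 (min d1 d2)"
    have "d > 0" "cball (x0, y0) d \<subseteq> S"
      using \<open>d0 > 0\<close> \<open>d1 > 0\<close> \<open>d2 > 0\<close> \<open>cball p d0 \<subseteq> S\<close> subset_cball[of d d0 p]
      by (auto simp: d_def p)
    then obtain x x' where "dist x p < d" "dist x' p < d" and agree: "w \<bullet> ?M x = w \<bullet> ?N x'"
      using mixed_pd_agree_near[OF _ _ diff] p by metis
    from \<open>dist x p < d\<close> \<open>dist x' p < d\<close> have "dist (w \<bullet> ?M x) (w \<bullet> ?M p) < \<bar>w \<bullet> ?M p - w \<bullet> ?N p\<bar> / 2"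
      "dist (w \<bullet> ?N x') (w \<bullet> ?N p) < \<bar>w \<bullet> ?M p - w \<bullet> ?N p\<bar> / 2"
      using d1 d2 by (simp_all add: d_def)
    moreover have "dist (w \<bullet> ?M p) (w \<bullet> ?N p) \<le> dist (w \<bullet> ?M x) (w \<bullet> ?M p) + dist (w \<bullet> ?N x') (w \<bullet> ?N p)"
      using dist_triangle3[of "w \<bullet> ?M p" "w \<bullet> ?N p" "w \<bullet> ?M x"] agree by simp
    ultimately show False
      by (simp add: dist_real_def)
  qed
  from this[of "?M p - ?N p"] have "(?M p - ?N p) \<bullet> (?M p - ?N p) = 0"
    by (simp only: inner_diff_right)
  then show ?thesis
    by simp
qed

section \<open>Smooth maps\<close>

lemma iter_pd_append: "iter_pd (ds @ es) g = iter_pd ds (iter_pd es g)"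
  by (induction ds g rule: iter_pd.induct) simp_all

lemma smooth_on_pd_u: "smooth_on S g \<Longrightarrow> smooth_on S (pd_u g)"
  unfolding smooth_on_def by (metis iter_pd.simps(1,2) iter_pd_append)

lemma smooth_on_pd_v: "smooth_on S g \<Longrightarrow> smooth_on S (pd_v g)"
  unfolding smooth_on_def by (metis iter_pd.simps(1,3) iter_pd_append)

lemma smooth_on_imp_differentiable: "open S \<Longrightarrow> smooth_on S g \<Longrightarrow> x \<in> S \<Longrightarrow> g differentiable (at x)"
  unfolding smooth_on_def by (metis iter_pd.simps(1) differentiable_on_eq_differentiable_at)

lemma smooth_on_imp_continuous_on: "smooth_on S g \<Longrightarrow> continuous_on S g"
  unfolding smooth_on_def by (metis iter_pd.simps(1) differentiable_imp_continuous_on)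

lemma smooth_on_pd_u_pd_v_commute:
  fixes g :: "real \<times> real \<Rightarrow> 'a::real_inner"
  assumes "open S" "smooth_on S g" "p \<in> S"
  shows "pd_u (pd_v g) p = pd_v (pd_u g) p"
  using assms
  by (intro pd_u_pd_v_commute)
    (auto intro: smooth_on_imp_differentiable smooth_on_imp_continuous_on smooth_on_pd_u smooth_on_pd_v)

lemma pd_v_pd_u_inner:
  fixes g h :: "real \<times> real \<Rightarrow> 'a::real_inner"
  assumes "open S" "p \<in> S" "smooth_on S g" "smooth_on S h"
  shows "pd_v (pd_u (\<lambda>x. g x \<bullet> h x)) p
    = pd_v (pd_u g) p \<bullet> h p + pd_u g p \<bullet> pd_v h p + pd_v g p \<bullet> pd_u h p + g p \<bullet> pd_v (pd_u h) p"
proof -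
  have diff: "k differentiable (at x)" if "smooth_on S k" "x \<in> S" for k :: "real \<times> real \<Rightarrow> 'a" and x
    using smooth_on_imp_differentiable[OF \<open>open S\<close> that] .
  note smooth = assms(3,4) smooth_on_pd_u[OF assms(3)] smooth_on_pd_u[OF assms(4)]
  have "pd_v (pd_u (\<lambda>x. g x \<bullet> h x)) p = pd_v (\<lambda>x. pd_u g x \<bullet> h x + g x \<bullet> pd_u h x) p"
    using assms(1,2) by (rule pd_v_cong_open) (simp_all add: pd_u_inner diff smooth assms(2))
  also have "\<dots> = pd_v (pd_u g) p \<bullet> h p + pd_u g p \<bullet> pd_v h p + (pd_v g p \<bullet> pd_u h p + g p \<bullet> pd_v (pd_u h) p)"
    by (simp add: pd_v_add pd_v_inner diff smooth assms(2))
  finally show ?thesis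
    by (simp add: add.assoc)
qed

lemma pd_v_pd_v_inner:
  fixes g h :: "real \<times> real \<Rightarrow> 'a::real_inner"
  assumes "open S" "p \<in> S" "smooth_on S g" "smooth_on S h"
  shows "pd_v (pd_v (\<lambda>x. g x \<bullet> h x)) p
    = pd_v (pd_v g) p \<bullet> h p + pd_v g p \<bullet> pd_v h p + pd_v g p \<bullet> pd_v h p + g p \<bullet> pd_v (pd_v h) p"
proof -
  have diff: "k differentiable (at x)" if "smooth_on S k" "x \<in> S" for k :: "real \<times> real \<Rightarrow> 'a" and x
    using smooth_on_imp_differentiable[OF \<open>open S\<close> that] .
  note smooth = assms(3,4) smooth_on_pd_v[OF assms(3)] smooth_on_pd_v[OF assms(4)]
  have "pd_v (pd_v (\<lambda>x. g x \<bullet> h x)) p = pd_v (\<lambda>x. pd_v g x \<bullet> h x + g x \<bullet> pd_v h x) p"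
    using assms(1,2) by (rule pd_v_cong_open) (simp_all add: pd_v_inner diff smooth assms(2))
  also have "\<dots> = pd_v (pd_v g) p \<bullet> h p + pd_v g p \<bullet> pd_v h p + (pd_v g p \<bullet> pd_v h p + g p \<bullet> pd_v (pd_v h) p)"
    by (simp add: pd_v_add pd_v_inner diff smooth assms(2))
  finally show ?thesis
    by (simp add: add.assoc)
qed

section \<open>Derivatives of the coefficients of the first fundamental form\<close>

lemma pd_inner_pd_u_pd_u:
  fixes f :: "real \<times> real \<Rightarrow> 'a::real_inner"
  assumes "open S" "p \<in> S" "smooth_on S f"
  shows "pd_u (\<lambda>x. pd_u f x \<bullet> pd_u f x) p = 2 * (pd_u f p \<bullet> pd_u (pd_u f) p)"
    and "pd_v (\<lambda>x. pd_u f x \<bullet> pd_u f x) p = 2 * (pd_u f p \<bullet> pd_v (pd_u f) p)"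
    and "pd_v (pd_v (\<lambda>x. pd_u f x \<bullet> pd_u f x)) p
      = 2 * (pd_u f p \<bullet> pd_v (pd_v (pd_u f)) p + pd_v (pd_u f) p \<bullet> pd_v (pd_u f) p)"
proof -
  have fu: "smooth_on S (pd_u f)"
    using assms(3) by (rule smooth_on_pd_u)
  then have "pd_u f differentiable (at p)"
    using assms(1,2) smooth_on_imp_differentiable by blast
  then show "pd_u (\<lambda>x. pd_u f x \<bullet> pd_u f x) p = 2 * (pd_u f p \<bullet> pd_u (pd_u f) p)"
    and "pd_v (\<lambda>x. pd_u f x \<bullet> pd_u f x) p = 2 * (pd_u f p \<bullet> pd_v (pd_u f) p)"
    by (simp_all add: pd_u_inner pd_v_inner inner_commute)
  show "pd_v (pd_v (\<lambda>x. pd_u f x \<bullet> pd_u f x)) p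
      = 2 * (pd_u f p \<bullet> pd_v (pd_v (pd_u f)) p + pd_v (pd_u f) p \<bullet> pd_v (pd_u f) p)"
    using pd_v_pd_v_inner[OF assms(1,2) fu fu] by (simp add: inner_commute)
qed

lemma pd_inner_pd_u_pd_v:
  fixes f :: "real \<times> real \<Rightarrow> 'a::real_inner"
  assumes "open S" "p \<in> S" "smooth_on S f" and "pd_v f p = 0"
  shows "pd_v (\<lambda>x. pd_u f x \<bullet> pd_v f x) p = pd_u f p \<bullet> pd_v (pd_v f) p"
    and "pd_v (pd_u (\<lambda>x. pd_u f x \<bullet> pd_v f x)) p
      = pd_u (pd_u f) p \<bullet> pd_v (pd_v f) p + pd_v (pd_u f) p \<bullet> pd_v (pd_u f) p
        + pd_u f p \<bullet> pd_v (pd_v (pd_u f)) p"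
proof -
  have fu: "smooth_on S (pd_u f)" and fv: "smooth_on S (pd_v f)"
    using assms(3) by (rule smooth_on_pd_u, rule smooth_on_pd_v)
  then have "pd_u f differentiable (at p)" "pd_v f differentiable (at p)"
    using assms(1,2) smooth_on_imp_differentiable by blast+
  then show "pd_v (\<lambda>x. pd_u f x \<bullet> pd_v f x) p = pd_u f p \<bullet> pd_v (pd_v f) p"
    by (simp add: pd_v_inner \<open>pd_v f p = 0\<close>)
  have "pd_v (pd_u (pd_v f)) p = pd_v (pd_v (pd_u f)) p"
  proof (rule pd_v_cong_open[OF assms(1,2)])
    show "pd_u (pd_v f) x = pd_v (pd_u f) x" if "x \<in> S" for x
      using smooth_on_pd_u_pd_v_commute[OF assms(1,3) that] .
    show "pd_v (pd_u f) differentiable (at p)"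
      using assms(1,2) smooth_on_imp_differentiable smooth_on_pd_v[OF fu] by blast
  qed
  then show "pd_v (pd_u (\<lambda>x. pd_u f x \<bullet> pd_v f x)) p
      = pd_u (pd_u f) p \<bullet> pd_v (pd_v f) p + pd_v (pd_u f) p \<bullet> pd_v (pd_u f) p
        + pd_u f p \<bullet> pd_v (pd_v (pd_u f)) p"
    using pd_v_pd_u_inner[OF assms(1,2) fu fv] smooth_on_pd_u_pd_v_commute[OF assms(1,3,2)]
    by (simp add: \<open>pd_v f p = 0\<close>)
qed

lemma pd_inner_pd_v_pd_v:
  fixes f :: "real \<times> real \<Rightarrow> 'a::real_inner"
  assumes "open S" "p \<in> S" "smooth_on S f" and "pd_v f p = 0"
  shows "pd_v (pd_u (\<lambda>x. pd_v f x \<bullet> pd_v f x)) p = 2 * (pd_v (pd_u f) p \<bullet> pd_v (pd_v f) p)"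
    and "pd_v (pd_v (\<lambda>x. pd_v f x \<bullet> pd_v f x)) p = 2 * (pd_v (pd_v f) p \<bullet> pd_v (pd_v f) p)"
proof -
  have fv: "smooth_on S (pd_v f)"
    using assms(3) by (rule smooth_on_pd_v)
  show "pd_v (pd_u (\<lambda>x. pd_v f x \<bullet> pd_v f x)) p = 2 * (pd_v (pd_u f) p \<bullet> pd_v (pd_v f) p)"
    using pd_v_pd_u_inner[OF assms(1,2) fv fv] smooth_on_pd_u_pd_v_commute[OF assms(1,3,2)]
    by (simp add: \<open>pd_v f p = 0\<close> inner_commute)
  show "pd_v (pd_v (\<lambda>x. pd_v f x \<bullet> pd_v f x)) p = 2 * (pd_v (pd_v f) p \<bullet> pd_v (pd_v f) p)"
    using pd_v_pd_v_inner[OF assms(1,2) fv fv] by (simp add: \<open>pd_v f p = 0\<close>)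
qed

section \<open>Parabolas and half-lines traced by quadratic curves\<close>

lemma quadratic_eq_scaled_square_imp_linear:
  fixes a a0 a1 a2 b0 b1 b2 :: real
  assumes "a \<noteq> 0" and eq: "\<And>s. a0 + a1 * s + a2 * s\<^sup>2 = a * (b0 + b1 * s + b2 * s\<^sup>2)\<^sup>2"
  shows "b2 = 0"
proof -
  \<comment> \<open>The fourth finite difference annihilates the quadratic on the left but is \<open>24 a b2\<^sup>2\<close> on the right.\<close>
  let ?\<delta>4 = "\<lambda>P :: real \<Rightarrow> real. P 2 - 4 * P 1 + 6 * P 0 - 4 * P (-1) + P (-2)"
  have "24 * a * b2\<^sup>2 = ?\<delta>4 (\<lambda>s. a * (b0 + b1 * s + b2 * s\<^sup>2)\<^sup>2)"
    by (simp add: power2_eq_square algebra_simps)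
  also have "\<dots> = ?\<delta>4 (\<lambda>s. a0 + a1 * s + a2 * s\<^sup>2)"
    by (simp only: eq)
  also have "\<dots> = 0"
    by (simp add: power2_eq_square algebra_simps)
  finally show ?thesis
    using \<open>a \<noteq> 0\<close> by simp
qed

lemma quadratic_onto_nonneg_imp_pos:
  fixes a0 a1 a2 :: real
  assumes onto: "range (\<lambda>s. a0 + a1 * s + a2 * s\<^sup>2) = {0..}"
  shows "a2 > 0"
proof (rule ccontr)
  let ?y = "\<lambda>s. a0 + a1 * s + a2 * s\<^sup>2"
  have nonneg: "?y s \<ge> 0" for s
  proof -
    have "?y s \<in> range ?y"
      by (rule rangeI)
    then show ?thesis
      unfolding onto by simp
  qed
  have hit: "\<exists>s. ?y s = T" if "T \<ge> 0" for T
  proof -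
    have "T \<in> range ?y"
      unfolding onto using that by simp
    then obtain s where "T = ?y s"
      by blast
    then show ?thesis
      by auto
  qed
  assume "\<not> a2 > 0"
  then consider "a2 < 0" | "a2 = 0" "a1 = 0" | "a2 = 0" "a1 \<noteq> 0"
    by linarith
  then show False
  proof cases
    case 1
    have bound: "?y s \<le> a0 + a1\<^sup>2 / (- 4 * a2)" for s
    proof -
      have "?y s = a0 + a1\<^sup>2 / (- 4 * a2) + a2 * (s + a1 / (2 * a2))\<^sup>2"
        using 1 by (simp add: power2_eq_square field_simps)
      moreover have "a2 * (s + a1 / (2 * a2))\<^sup>2 \<le> 0"
        using 1 by (simp add: mult_nonpos_nonneg)
      ultimately show ?thesis
        by linarith
    qed
    have "a1\<^sup>2 / (- 4 * a2) \<ge> 0"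
      using 1 by (intro divide_nonneg_pos) auto
    then obtain s where "?y s = \<bar>a0\<bar> + a1\<^sup>2 / (- 4 * a2) + 1"
      using hit[of "\<bar>a0\<bar> + a1\<^sup>2 / (- 4 * a2) + 1"] by auto
    with bound[of s] show False
      by linarith
  next
    case 2
    obtain s where "?y s = \<bar>a0\<bar> + 1"
      using hit[of "\<bar>a0\<bar> + 1"] by auto
    with 2 show False
      by simp
  next
    case 3
    then have "?y (- (\<bar>a0\<bar> + 1) / a1) < 0"
      by simp
    with nonneg show False
      by (metis not_le)
  qed
qed

lemma second_difference_quadratic_curve:
  fixes c w1 w2 :: "real^3"
  defines "p \<equiv> \<lambda>s. c + s *\<^sub>R w1 + s\<^sup>2 *\<^sub>R w2"
  shows "2 *\<^sub>R w2 = (p 1 - c0) + (p (-1) - c0) - 2 *\<^sub>R (p 0 - c0)"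
  by (simp add: p_def vec_eq_iff algebra_simps)

lemma parabola_axis_range_quadratic:
  fixes c w1 w2 v :: "real^3"
  assumes "parabola_axis (range (\<lambda>s. c + s *\<^sub>R w1 + s\<^sup>2 *\<^sub>R w2)) v"
  shows "\<exists>l>0. w2 = l *\<^sub>R v"
proof -
  let ?p = "\<lambda>s. c + s *\<^sub>R w1 + s\<^sup>2 *\<^sub>R w2"
  obtain c0 e1 a where "norm v = 1" "norm e1 = 1" "e1 \<bullet> v = 0" "a > 0"
    and P: "range ?p = {c0 + t *\<^sub>R e1 + (a * t\<^sup>2) *\<^sub>R v | t. True}"
    using assms unfolding parabola_axis_def by blast
  then have vv: "v \<bullet> v = 1" and ee: "e1 \<bullet> e1 = 1" and ve: "v \<bullet> e1 = 0" "e1 \<bullet> v = 0"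
    by (simp_all add: dot_square_norm inner_commute)
  define x where "x s = (?p s - c0) \<bullet> e1" for s
  have on_P: "?p s - c0 = x s *\<^sub>R e1 + (a * (x s)\<^sup>2) *\<^sub>R v" for s
  proof -
    obtain t where "?p s - c0 = t *\<^sub>R e1 + (a * t\<^sup>2) *\<^sub>R v"
      using rangeI[of ?p s] unfolding P by (auto simp: algebra_simps)
    moreover from this have "x s = t"
      by (simp add: x_def inner_add_left ee ve)
    ultimately show ?thesis
      by simp
  qed
  have x: "x s = (c - c0) \<bullet> e1 + (w1 \<bullet> e1) * s + (w2 \<bullet> e1) * s\<^sup>2" for s
    by (simp add: x_def algebra_simps inner_add_left inner_diff_left)
  have "(c - c0) \<bullet> v + (w1 \<bullet> v) * s + (w2 \<bullet> v) * s\<^sup>2 = a * (x s)\<^sup>2" for s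
    using arg_cong[OF on_P[of s], of "\<lambda>z. z \<bullet> v"]
    by (simp add: algebra_simps inner_add_left inner_diff_left vv ve)
  then have "w2 \<bullet> e1 = 0"
    using quadratic_eq_scaled_square_imp_linear[of a "(c - c0) \<bullet> v" "w1 \<bullet> v" "w2 \<bullet> v"] \<open>a > 0\<close>
    unfolding x by simp
  have "w1 \<bullet> e1 \<noteq> 0"
  proof
    assume "w1 \<bullet> e1 = 0"
    let ?t = "(c - c0) \<bullet> e1 + 1"
    have "c0 + ?t *\<^sub>R e1 + (a * ?t\<^sup>2) *\<^sub>R v \<in> range ?p"
      unfolding P by blast
    then obtain s where s: "c0 + ?t *\<^sub>R e1 + (a * ?t\<^sup>2) *\<^sub>R v = ?p s"
      by (rule rangeE)
    have "x s = ?t"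
      by (simp add: x_def inner_add_left ee ve flip: s)
    with x[of s] \<open>w1 \<bullet> e1 = 0\<close> \<open>w2 \<bullet> e1 = 0\<close> show False
      by simp
  qed
  have "2 *\<^sub>R w2 = (?p 1 - c0) + (?p (-1) - c0) - 2 *\<^sub>R (?p 0 - c0)"
    by (rule second_difference_quadratic_curve)
  also have "\<dots> = (x 1 + x (-1) - 2 * x 0) *\<^sub>R e1 + (a * ((x 1)\<^sup>2 + (x (-1))\<^sup>2 - 2 * (x 0)\<^sup>2)) *\<^sub>R v"
    by (simp only: on_P) (simp add: algebra_simps)
  also have "\<dots> = 2 *\<^sub>R ((a * (w1 \<bullet> e1)\<^sup>2) *\<^sub>R v)"
    unfolding x \<open>w2 \<bullet> e1 = 0\<close> by (simp add: algebra_simps power2_eq_square)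
  finally have "w2 = (a * (w1 \<bullet> e1)\<^sup>2) *\<^sub>R v"
    by (metis scaleR_cancel_left zero_neq_numeral)
  moreover have "a * (w1 \<bullet> e1)\<^sup>2 > 0"
    using \<open>a > 0\<close> \<open>w1 \<bullet> e1 \<noteq> 0\<close> by simp
  ultimately show ?thesis
    by blast
qed

lemma half_line_dir_range_quadratic:
  fixes c w1 w2 v :: "real^3"
  assumes "half_line_dir (range (\<lambda>s. c + s *\<^sub>R w1 + s\<^sup>2 *\<^sub>R w2)) v"
  shows "\<exists>l>0. w2 = l *\<^sub>R v"
proof -
  let ?p = "\<lambda>s. c + s *\<^sub>R w1 + s\<^sup>2 *\<^sub>R w2"
  obtain c0 where "norm v = 1" and P: "range ?p = {c0 + t *\<^sub>R v | t. t \<ge> 0}"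
    using assms unfolding half_line_dir_def by blast
  then have vv: "v \<bullet> v = 1"
    by (simp add: dot_square_norm)
  define y where "y s = (?p s - c0) \<bullet> v" for s
  have on_P: "?p s - c0 = y s *\<^sub>R v" for s
  proof -
    obtain t where "?p s - c0 = t *\<^sub>R v"
      using rangeI[of ?p s] unfolding P by (auto simp: algebra_simps)
    moreover from this have "y s = t"
      by (simp add: y_def vv)
    ultimately show ?thesis
      by simp
  qed
  have "range y = {0..}"
  proof (intro equalityI subsetI)
    fix T assume "T \<in> range y"
    then obtain s where "T = y s"
      by blast
    obtain t where "t \<ge> 0" "?p s = c0 + t *\<^sub>R v"
      using rangeI[of ?p s] unfolding P by blast
    with \<open>T = y s\<close> show "T \<in> {0..}"
      by (simp add: y_def vv)
  next
    fix T :: real assume "T \<in> {0..}"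
    then have "c0 + T *\<^sub>R v \<in> range ?p"
      unfolding P by auto
    then obtain s where s: "c0 + T *\<^sub>R v = ?p s"
      by (rule rangeE)
    have "T = y s"
      by (simp add: y_def vv flip: s)
    then show "T \<in> range y"
      by blast
  qed
  moreover have y: "y = (\<lambda>s. (c - c0) \<bullet> v + (w1 \<bullet> v) * s + (w2 \<bullet> v) * s\<^sup>2)"
    by (simp add: y_def fun_eq_iff algebra_simps inner_add_left inner_diff_left)
  ultimately have "w2 \<bullet> v > 0"
    using quadratic_onto_nonneg_imp_pos by simp
  have "2 *\<^sub>R w2 = (?p 1 - c0) + (?p (-1) - c0) - 2 *\<^sub>R (?p 0 - c0)"
    by (rule second_difference_quadratic_curve)
  also have "\<dots> = (y 1 + y (-1) - 2 * y 0) *\<^sub>R v"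
    by (simp only: on_P) (simp add: algebra_simps)
  also have "\<dots> = 2 *\<^sub>R ((w2 \<bullet> v) *\<^sub>R v)"
    unfolding y by simp
  finally have "w2 = (w2 \<bullet> v) *\<^sub>R v"
    by (metis scaleR_cancel_left zero_neq_numeral)
  with \<open>w2 \<bullet> v > 0\<close> show ?thesis
    by blast
qed

lemma the_min_range_quadratic:
  fixes \<alpha> \<beta> \<gamma> :: real
  assumes "\<gamma> > 0"
  defines "K \<equiv> range (\<lambda>s. \<alpha> + \<beta> * s + \<gamma> * s\<^sup>2)"
  shows "(THE m. m \<in> K \<and> (\<forall>k\<in>K. m \<le> k)) = \<alpha> - \<beta>\<^sup>2 / (4 * \<gamma>)"
proof (rule the_equality)
  let ?m = "\<alpha> - \<beta>\<^sup>2 / (4 * \<gamma>)"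
  have square: "\<alpha> + \<beta> * s + \<gamma> * s\<^sup>2 = ?m + \<gamma> * (s + \<beta> / (2 * \<gamma>))\<^sup>2" for s
    using assms by (simp add: power2_eq_square field_simps)
  have "?m = \<alpha> + \<beta> * (- \<beta> / (2 * \<gamma>)) + \<gamma> * (- \<beta> / (2 * \<gamma>))\<^sup>2"
    using square[of "- \<beta> / (2 * \<gamma>)"] by simp
  then have "?m \<in> K"
    unfolding K_def by (rule range_eqI)
  moreover have lower: "?m \<le> k" if "k \<in> K" for k
  proof -
    obtain s where "k = \<alpha> + \<beta> * s + \<gamma> * s\<^sup>2"
      using \<open>k \<in> K\<close> unfolding K_def by blast
    with square[of s] \<open>\<gamma> > 0\<close> show ?thesis
      by simp
  qed
  ultimately show "?m \<in> K \<and> (\<forall>k\<in>K. ?m \<le> k)"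
    by blast
  show "m = ?m" if "m \<in> K \<and> (\<forall>k\<in>K. m \<le> k)" for m
    using that lower \<open>?m \<in> K\<close> by (simp add: order_antisym)
qed

section \<open>The curvature parabola at a corank one point\<close>

definition reject :: "'a::real_inner \<Rightarrow> 'a \<Rightarrow> 'a" where
  "reject u x = x - ((x \<bullet> u) / (u \<bullet> u)) *\<^sub>R u"

lemma inner_reject:
  "u \<noteq> 0 \<Longrightarrow> reject u x \<bullet> reject u y = x \<bullet> y - (x \<bullet> u) * (y \<bullet> u) / (u \<bullet> u)"
  by (simp add: reject_def inner_diff_left inner_diff_right inner_commute field_simps power2_eq_square)

lemma normal_proj_eq_reject:
  assumes FD: "\<And>X. frechet_derivative f (at q) X = fst X *\<^sub>R U" and "U \<noteq> 0"
  shows "normal_proj f q x = reject U x"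
  unfolding normal_proj_def
proof (rule the_equality)
  have T: "tangent_space f q = range (\<lambda>r. r *\<^sub>R U)"
    unfolding tangent_space_def FD by (auto simp: image_iff)
  then show "reject U x \<in> normal_space f q \<and> x - reject U x \<in> tangent_space f q"
    using \<open>U \<noteq> 0\<close> by (auto simp: normal_space_def reject_def inner_diff_left)
  fix y assume y: "y \<in> normal_space f q \<and> x - y \<in> tangent_space f q"
  then obtain r where "x - y = r *\<^sub>R U"
    unfolding T by blast
  then have r: "y = x - r *\<^sub>R U"
    by (simp add: algebra_simps)
  have "U \<in> tangent_space f q"
    unfolding T by (rule range_eqI[of _ _ 1]) simp
  with y have "y \<bullet> U = 0"
    by (simp add: normal_space_def inner_commute)
  then have "x \<bullet> U - r * (U \<bullet> U) = 0"
    unfolding r by (simp add: inner_diff_left)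
  with \<open>U \<noteq> 0\<close> have "r = (x \<bullet> U) / (U \<bullet> U)"
    by (simp add: field_simps)
  with r show "y = reject U x"
    by (simp add: reject_def)
qed

lemma curvature_parabola_corank1:
  assumes FD: "\<And>X. frechet_derivative f (at q) X = fst X *\<^sub>R U" and "U \<noteq> 0"
  defines "N \<equiv> normal_proj f q"
  shows "curvature_parabola f q = range (\<lambda>s. (1 / (U \<bullet> U)) *\<^sub>R N (pd_u (pd_u f) q)
    + s *\<^sub>R ((2 / norm U) *\<^sub>R N (pd_v (pd_u f) q)) + s\<^sup>2 *\<^sub>R N (pd_v (pd_v f) q))"
    (is "_ = range ?p")
proof -
  have first: "first_ff f q X X = (fst X * norm U)\<^sup>2" for X
    by (simp add: first_ff_def FD power_mult_distrib dot_square_norm)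
  have second: "second_ff f q (r, t) (r, t) = r\<^sup>2 *\<^sub>R N (pd_u (pd_u f) q)
      + (2 * r * t) *\<^sub>R N (pd_v (pd_u f) q) + t\<^sup>2 *\<^sub>R N (pd_v (pd_v f) q)" for r t
    by (simp add: second_ff_def N_def power2_eq_square)
  have nU: "norm U > 0" "(norm U)\<^sup>2 = U \<bullet> U"
    using \<open>U \<noteq> 0\<close> by (simp_all add: dot_square_norm)
  have plus: "second_ff f q (1 / norm U, t) (1 / norm U, t) = ?p t"
    and minus: "second_ff f q (- 1 / norm U, t) (- 1 / norm U, t) = ?p (- t)" for t
    unfolding second using nU by (simp_all add: power_divide)
  have unit: "first_ff f q (r, t) (r, t) = 1 \<longleftrightarrow> r = 1 / norm U \<or> r = - 1 / norm U" for r t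
  proof -
    have "first_ff f q (r, t) (r, t) = 1 \<longleftrightarrow> r * norm U = 1 \<or> r * norm U = - 1"
      unfolding first by (simp only: fst_conv power2_eq_1_iff)
    with nU show ?thesis
      by (auto simp: field_simps)
  qed
  show ?thesis
  proof (intro equalityI subsetI)
    fix z assume "z \<in> curvature_parabola f q"
    then obtain X where z: "z = second_ff f q X X" and "first_ff f q X X = 1"
      unfolding curvature_parabola_def by blast
    moreover obtain r t where "X = (r, t)"
      by (cases X)
    ultimately have "z = ?p t \<or> z = ?p (- t)"
      using unit plus minus by auto
    then show "z \<in> range ?p"
      by blast
  next
    fix z assume "z \<in> range ?p"
    then obtain t where "z = ?p t"
      by blast
    then have "z = second_ff f q (1 / norm U, t) (1 / norm U, t)"
      and "first_ff f q (1 / norm U, t) (1 / norm U, t) = 1"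
      by (simp_all add: plus unit)
    then show "z \<in> curvature_parabola f q"
      unfolding curvature_parabola_def by blast
  qed
qed

lemma axial_curvature_range_quadratic:
  fixes c w1 w2 :: "real^3"
  assumes P: "curvature_parabola f q = range (\<lambda>s. c + s *\<^sub>R w1 + s\<^sup>2 *\<^sub>R w2)"
    and shape: "nondeg_parabola (curvature_parabola f q) \<or> half_line (curvature_parabola f q)"
  shows "w2 \<noteq> 0" and "axial_curvature f q = c \<bullet> sgn w2 - (w1 \<bullet> sgn w2)\<^sup>2 / (4 * norm w2)"
proof -
  have axis: "v = sgn w2 \<and> w2 \<noteq> 0"
    if hv: "parabola_axis (curvature_parabola f q) v \<or> half_line_dir (curvature_parabola f q) v" for v
  proof -
    obtain l where "l > 0" "w2 = l *\<^sub>R v"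
      using hv parabola_axis_range_quadratic half_line_dir_range_quadratic unfolding P by blast
    moreover have "norm v = 1"
      using hv unfolding parabola_axis_def half_line_dir_def by blast
    ultimately show ?thesis
      by (auto simp: sgn_div_norm)
  qed
  obtain v where v: "parabola_axis (curvature_parabola f q) v \<or> half_line_dir (curvature_parabola f q) v"
    using shape unfolding nondeg_parabola_def half_line_def by blast
  then show "w2 \<noteq> 0"
    using axis by blast
  have "axial_vector f q = sgn w2"
    unfolding axial_vector_def by (rule the_equality) (use v axis in auto)
  have "w2 \<bullet> sgn w2 = norm w2"
    using \<open>w2 \<noteq> 0\<close> by (simp add: sgn_div_norm dot_square_norm power2_eq_square)
  have "{second_ff f q X X \<bullet> axial_vector f q | X. first_ff f q X X = 1}
      = (\<lambda>z. z \<bullet> sgn w2) ` curvature_parabola f q"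
    unfolding curvature_parabola_def \<open>axial_vector f q = sgn w2\<close> by blast
  also have "\<dots> = range (\<lambda>s. (c + s *\<^sub>R w1 + s\<^sup>2 *\<^sub>R w2) \<bullet> sgn w2)"
    unfolding P by (simp add: image_image)
  also have "(\<lambda>s. (c + s *\<^sub>R w1 + s\<^sup>2 *\<^sub>R w2) \<bullet> sgn w2)
      = (\<lambda>s. c \<bullet> sgn w2 + (w1 \<bullet> sgn w2) * s + norm w2 * s\<^sup>2)"
    using \<open>w2 \<bullet> sgn w2 = norm w2\<close> by (simp add: inner_add_left fun_eq_iff mult.commute)
  finally have K: "{second_ff f q X X \<bullet> axial_vector f q | X. first_ff f q X X = 1}
      = range (\<lambda>s. c \<bullet> sgn w2 + (w1 \<bullet> sgn w2) * s + norm w2 * s\<^sup>2)" .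
  show "axial_curvature f q = c \<bullet> sgn w2 - (w1 \<bullet> sgn w2)\<^sup>2 / (4 * norm w2)"
    unfolding axial_curvature_def Let_def K
    by (rule the_min_range_quadratic) (simp add: \<open>w2 \<noteq> 0\<close>)
qed

lemma axial_curvature_corank1:
  fixes f :: "real \<times> real \<Rightarrow> real^3" and U A B C :: "real^3"
  assumes FD: "\<And>X. frechet_derivative f (at q) X = fst X *\<^sub>R U" and "U \<noteq> 0"
    and second: "pd_u (pd_u f) q = A" "pd_v (pd_u f) q = B" "pd_v (pd_v f) q = C"
    and shape: "nondeg_parabola (curvature_parabola f q) \<or> half_line (curvature_parabola f q)"
  shows "axial_curvature f q =
    (((U \<bullet> A) * (U \<bullet> C) - (U \<bullet> U) * (A \<bullet> C)) * ((U \<bullet> C)\<^sup>2 - (U \<bullet> U) * (C \<bullet> C))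
     - ((U \<bullet> B) * (U \<bullet> C) - (U \<bullet> U) * (B \<bullet> C))\<^sup>2)
    / ((U \<bullet> U) * ((U \<bullet> U) * (C \<bullet> C) - (U \<bullet> C)\<^sup>2)) powr (3/2)"
proof -
  define E where "E = U \<bullet> U"
  define a where "a = reject U A \<bullet> reject U C"
  define b where "b = reject U B \<bullet> reject U C"
  define n where "n = norm (reject U C)"
  have "E > 0" "(norm U)\<^sup>2 = E"
    using \<open>U \<noteq> 0\<close> by (simp_all add: E_def dot_square_norm)
  have "normal_proj f q = reject U"
    using normal_proj_eq_reject[OF FD \<open>U \<noteq> 0\<close>] by blast
  then have P: "curvature_parabola f q = range (\<lambda>s. (1 / E) *\<^sub>R reject U A
      + s *\<^sub>R ((2 / norm U) *\<^sub>R reject U B) + s\<^sup>2 *\<^sub>R reject U C)"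
    using curvature_parabola_corank1[OF FD \<open>U \<noteq> 0\<close>] by (simp add: second E_def)
  note axial = axial_curvature_range_quadratic[OF P shape]
  have "n > 0"
    using axial(1) by (simp add: n_def)
  have "n\<^sup>2 = reject U C \<bullet> reject U C"
    by (simp add: n_def power2_norm_eq_inner)
  then have A: "(U \<bullet> A) * (U \<bullet> C) - (U \<bullet> U) * (A \<bullet> C) = - E * a"
    and B: "(U \<bullet> B) * (U \<bullet> C) - (U \<bullet> U) * (B \<bullet> C) = - E * b"
    and C: "(U \<bullet> C)\<^sup>2 - (U \<bullet> U) * (C \<bullet> C) = - E * n\<^sup>2"
    using \<open>E > 0\<close> inner_reject[OF \<open>U \<noteq> 0\<close>]
    by (simp_all add: a_def b_def E_def field_simps inner_commute power2_eq_square)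
  have "(U \<bullet> U) * (C \<bullet> C) - (U \<bullet> C)\<^sup>2 = E * n\<^sup>2"
    using C by linarith
  then have den: "(U \<bullet> U) * ((U \<bullet> U) * (C \<bullet> C) - (U \<bullet> C)\<^sup>2) = (E * n)\<^sup>2"
    by (simp add: E_def power2_eq_square algebra_simps)
  have "((E * n)\<^sup>2) powr (3/2) = (E * n) ^ 3"
    using \<open>E > 0\<close> \<open>n > 0\<close> by (simp add: powr_powr flip: powr_numeral)
  have "axial_curvature f q = a / (E * n) - (2 * b / (norm U * n))\<^sup>2 / (4 * n)"
    unfolding axial(2) using axial(1) \<open>E > 0\<close> \<open>U \<noteq> 0\<close>
    by (simp add: sgn_div_norm a_def b_def n_def field_simps)
  also have "\<dots> = ((- E * a) * (- E * n\<^sup>2) - (- E * b)\<^sup>2) / ((E * n)\<^sup>2) powr (3/2)"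
    unfolding \<open>((E * n)\<^sup>2) powr (3/2) = (E * n) ^ 3\<close>
    using \<open>E > 0\<close> \<open>n > 0\<close> \<open>(norm U)\<^sup>2 = E\<close> by (simp add: field_simps power2_eq_square power3_eq_cube)
  finally show ?thesis
    unfolding A B C den .
qed

theorem mainTheorem4:
  fixes f :: "real \<times> real \<Rightarrow> real^3" and q :: "real \<times> real" and S :: "(real \<times> real) set"
  assumes "open S" and "q \<in> S" and "smooth_on S f"
    and corank1: "dim (tangent_space f q) = 1"
    and shape: "nondeg_parabola (curvature_parabola f q) \<or> half_line (curvature_parabola f q)"
    and "pd_u f q \<noteq> 0" and "pd_v f q = 0"
  defines "E \<equiv> \<lambda>x. pd_u f x \<bullet> pd_u f x"
    and "F \<equiv> \<lambda>x. pd_u f x \<bullet> pd_v f x"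
    and "G \<equiv> \<lambda>x. pd_v f x \<bullet> pd_v f x"
  shows "axial_curvature f q =
    ((pd_u E q / 2 * pd_v F q - E q * (pd_v (pd_u F) q - pd_v (pd_v E) q / 2))
       * ((pd_v F q)\<^sup>2 - E q * pd_v (pd_v G) q / 2)
     - (pd_v E q / 2 * pd_v F q - E q * pd_v (pd_u G) q / 2)\<^sup>2)
    / (E q * (E q * pd_v (pd_v G) q / 2 - (pd_v F q)\<^sup>2)) powr (3/2)"
proof -
  have "f differentiable (at q)"
    using smooth_on_imp_differentiable assms(1-3) by blast
  then have FD: "frechet_derivative f (at q) X = fst X *\<^sub>R pd_u f q" for X
    using frechet_derivative_eq_pd[of f q X] \<open>pd_v f q = 0\<close> by simp
  note E_derivs = pd_inner_pd_u_pd_u[OF assms(1-3)]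
    and F_derivs = pd_inner_pd_u_pd_v[OF assms(1-3) \<open>pd_v f q = 0\<close>]
    and G_derivs = pd_inner_pd_v_pd_v[OF assms(1-3) \<open>pd_v f q = 0\<close>]
  let ?U = "pd_u f q" and ?A = "pd_u (pd_u f) q" and ?B = "pd_v (pd_u f) q" and ?C = "pd_v (pd_v f) q"
  have "pd_u E q / 2 * pd_v F q - E q * (pd_v (pd_u F) q - pd_v (pd_v E) q / 2)
      = (?U \<bullet> ?A) * (?U \<bullet> ?C) - (?U \<bullet> ?U) * (?A \<bullet> ?C)"
    and "(pd_v F q)\<^sup>2 - E q * pd_v (pd_v G) q / 2 = (?U \<bullet> ?C)\<^sup>2 - (?U \<bullet> ?U) * (?C \<bullet> ?C)"
    and "pd_v E q / 2 * pd_v F q - E q * pd_v (pd_u G) q / 2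
      = (?U \<bullet> ?B) * (?U \<bullet> ?C) - (?U \<bullet> ?U) * (?B \<bullet> ?C)"
    and "E q * (E q * pd_v (pd_v G) q / 2 - (pd_v F q)\<^sup>2)
      = (?U \<bullet> ?U) * ((?U \<bullet> ?U) * (?C \<bullet> ?C) - (?U \<bullet> ?C)\<^sup>2)"
    unfolding E_def F_def G_def E_derivs F_derivs G_derivs by (simp_all add: algebra_simps inner_commute)
  with axial_curvature_corank1[OF FD \<open>pd_u f q \<noteq> 0\<close> refl refl refl shape] show ?thesis
    by simp
qed

end
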